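(* In the Bell scenario with $\mathcal{X}=\mathcal{Y}=\mathcal{A}=\mathcal{B}=\{0,1\}$, the conditional distribution $p^H$ defined by $p^H(00|00)=\tfrac{5\sqrt5-11}{2}$, $p^H(01|00)=p^H(10|00)=\tfrac{7-3\sqrt5}{2}$, $p^H(11|00)=\tfrac{\sqrt5-1}{2}$; $p^H(00|01)=\sqrt5-2$, $p^H(01|01)=0$, $p^H(10|01)=\tfrac{7-3\sqrt5}{2}$, $p^H(11|01)=\tfrac{\sqrt5-1}{2}$; $p^H(00|10)=\sqrt5-2$, $p^H(01|10)=\tfrac{7-3\sqrt5}{2}$, $p^H(10|10)=0$, $p^H(11|10)=\tfrac{\sqrt5-1}{2}$; $p^H(00|11)=0$, $p^H(01|11)=p^H(10|11)=\tfrac{3-\sqrt5}{2}$, $p^H(11|11)=\sqrt5-2$ (where $p^H(ab|xy)$ is listed as $p^H(ab|xy)$ with the pair $xy$ after the bar) belongs to $\mathcal{P}_2^{AB,(1/4,1/4)}$. Consequently, for any $0<l\le h$ and any distribution $p_{XY}$ with $l\le p_{XY}(xy)\le h$ for all $x,y$, the joint behavior $p_{XY}(xy)\,p^H(ab|xy)$ lies in the $(l,h,1/4,1/4)$-MDPDL set.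
   Context: $\mathcal{P}_2^{AB,(\epsilon_A,\epsilon_B)}$ denotes the set of all conditional distributions $p=(p(ab|xy))$ for which there exist a probability space $(\Lambda,q)$ and distributions $p_A(\cdot|x,y,\lambda)$ on $\mathcal{A}$, $p_B(\cdot|x,y,\lambda)$ on $\mathcal{B}$ with $p(ab|xy)=\int q(d\lambda)p_A(a|xy\lambda)p_B(b|xy\lambda)$, $\frac12\sum_a|p_A(a|xy\lambda)-p_A(a|xy'\lambda)|\le\epsilon_A$ for all $x,y,y',\lambda$, and $\frac12\sum_b|p_B(b|xy\lambda)-p_B(b|x'y\lambda)|\le\epsilon_B$ for all $y,x,x',\lambda$. The $(l,h,\epsilon_A,\epsilon_B)$-MDPDL set is the set of joint distributions $p(abxy)=\int q(d\lambda)\,p_{XY|\Lambda}(xy|\lambda)\,p_A(a|xy\lambda)\,p_B(b|xy\lambda)$ with $l\le p_{XY|\Lambda}(xy|\lambda)\le h$ for all $x,y,\lambda$ and $p_A,p_B$ satisfying the same two total-variation constraints. *)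

theory Defs
  imports "HOL-Probability.Probability"
begin

text \<open>Conditional distributions are functions p a b x y = p(ab|xy) on finite alphabets.
  The hidden-variable probability space (Lambda, q) is modelled as a probability measure on
  the reals; the local response functions are (measurable) families of probability vectors.\<close>

definition is_distr :: "('a::finite \<Rightarrow> real) \<Rightarrow> bool" where
  "is_distr f \<longleftrightarrow> (\<forall>a. 0 \<le> f a) \<and> (\<Sum>a\<in>UNIV. f a) = 1"

definition P2 :: "real \<Rightarrow> real \<Rightarrow>
    ('a::finite \<Rightarrow> 'b::finite \<Rightarrow> 'x::finite \<Rightarrow> 'y::finite \<Rightarrow> real) \<Rightarrow> bool" where
  "P2 epsA epsB p \<longleftrightarrow>
    (\<exists>(q::real measure) (pA :: 'x \<Rightarrow> 'y \<Rightarrow> real \<Rightarrow> 'a \<Rightarrow> real)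
                        (pB :: 'x \<Rightarrow> 'y \<Rightarrow> real \<Rightarrow> 'b \<Rightarrow> real).
       prob_space q \<and>
       (\<forall>x y a. (\<lambda>l. pA x y l a) \<in> borel_measurable q) \<and>
       (\<forall>x y b. (\<lambda>l. pB x y l b) \<in> borel_measurable q) \<and>
       (\<forall>x y l. is_distr (pA x y l) \<and> is_distr (pB x y l)) \<and>
       (\<forall>a b x y. p a b x y = (\<integral>l. pA x y l a * pB x y l b \<partial>q)) \<and>
       (\<forall>x y y' l. (1/2) * (\<Sum>a\<in>UNIV. \<bar>pA x y l a - pA x y' l a\<bar>) \<le> epsA) \<and>
       (\<forall>y x x' l. (1/2) * (\<Sum>b\<in>UNIV. \<bar>pB x y l b - pB x' y l b\<bar>) \<le> epsB))"

definition MDPDL :: "real \<Rightarrow> real \<Rightarrow> real \<Rightarrow> real \<Rightarrow>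
    ('a::finite \<Rightarrow> 'b::finite \<Rightarrow> 'x::finite \<Rightarrow> 'y::finite \<Rightarrow> real) \<Rightarrow> bool" where
  "MDPDL lo hi epsA epsB P \<longleftrightarrow>
    (\<exists>(q::real measure) (pXY :: real \<Rightarrow> 'x \<times> 'y \<Rightarrow> real)
                        (pA :: 'x \<Rightarrow> 'y \<Rightarrow> real \<Rightarrow> 'a \<Rightarrow> real)
                        (pB :: 'x \<Rightarrow> 'y \<Rightarrow> real \<Rightarrow> 'b \<Rightarrow> real).
       prob_space q \<and>
       (\<forall>x y. (\<lambda>l. pXY l (x, y)) \<in> borel_measurable q) \<and>
       (\<forall>x y a. (\<lambda>l. pA x y l a) \<in> borel_measurable q) \<and>
       (\<forall>x y b. (\<lambda>l. pB x y l b) \<in> borel_measurable q) \<and>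
       (\<forall>l. is_distr (pXY l)) \<and>
       (\<forall>x y l. lo \<le> pXY l (x, y) \<and> pXY l (x, y) \<le> hi) \<and>
       (\<forall>x y l. is_distr (pA x y l) \<and> is_distr (pB x y l)) \<and>
       (\<forall>a b x y. P a b x y = (\<integral>l. pXY l (x, y) * pA x y l a * pB x y l b \<partial>q)) \<and>
       (\<forall>x y y' l. (1/2) * (\<Sum>a\<in>UNIV. \<bar>pA x y l a - pA x y' l a\<bar>) \<le> epsA) \<and>
       (\<forall>y x x' l. (1/2) * (\<Sum>b\<in>UNIV. \<bar>pB x y l b - pB x' y l b\<bar>) \<le> epsB))"

text \<open>The binary alphabet {0,1} is encoded as bool with False = 0, True = 1.
  pH a b x y = p^H(ab|xy).\<close>
definition pH :: "bool \<Rightarrow> bool \<Rightarrow> bool \<Rightarrow> bool \<Rightarrow> real" where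
  "pH a b x y =
    (     if \<not> x \<and> \<not> y then
       (if \<not> a \<and> \<not> b then (5 * sqrt 5 - 11)/2
        else if \<not> a \<and> b then (7 - 3 * sqrt 5)/2
        else if a \<and> \<not> b then (7 - 3 * sqrt 5)/2
        else (sqrt 5 - 1)/2)
     else if \<not> x \<and> y then
       (if \<not> a \<and> \<not> b then sqrt 5 - 2
        else if \<not> a \<and> b then 0
        else if a \<and> \<not> b then (7 - 3 * sqrt 5)/2
        else (sqrt 5 - 1)/2)
     else if x \<and> \<not> y then
       (if \<not> a \<and> \<not> b then sqrt 5 - 2
        else if \<not> a \<and> b then (7 - 3 * sqrt 5)/2
        else if a \<and> \<not> b then 0
        else (sqrt 5 - 1)/2)
     else
       (if \<not> a \<and> \<not> b then 0
        else if \<not> a \<and> b then (3 - sqrt 5)/2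
        else if a \<and> \<not> b then (3 - sqrt 5)/2
        else sqrt 5 - 2))"

end

theory Submission
  imports Defs
begin

(* p^H has an explicit local model with eight hidden states l = 1..8, drawn with the weights of
   hidden_weights (the solution of the linear system matching the 16 values of p^H; they are
   positive because 2.236 < sqrt 5 < 2.2361). In every state each party tosses a biased coin
   whose bias changes by at most 1/4 with the other party's input, and the total-variation
   distance between two coins is just the difference of their biases. For the MDPDL set one
   keeps this model and lets the input distribution not depend on the hidden state. *)

definition bernoulli_distr :: "real \<Rightarrow> bool \<Rightarrow> real" where
  "bernoulli_distr r = (\<lambda>a. if a then r else 1 - r)"

lemma is_distr_bernoulli_distr: "0 \<le> r \<Longrightarrow> r \<le> 1 \<Longrightarrow> is_distr (bernoulli_distr r)"
  unfolding is_distr_def bernoulli_distr_def UNIV_bool by simp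

lemma total_variation_bernoulli_distr:
  "(1/2) * (\<Sum>a\<in>UNIV. \<bar>bernoulli_distr r a - bernoulli_distr s a\<bar>) = \<bar>r - s\<bar>"
  unfolding bernoulli_distr_def UNIV_bool by simp

lemma integral_pmf_of_list:
  assumes "pmf_of_list_wf xs"
  shows "(\<integral>x. f x \<partial>measure_pmf (pmf_of_list xs)) = (\<Sum>(x, w)\<leftarrow>xs. f x * w)"
proof -
  have sum_eq: "(\<Sum>a\<in>S. f a * sum_list (map snd (filter (\<lambda>z. fst z = a) ys)))
      = (\<Sum>(x, w)\<leftarrow>ys. f x * w)"
    if "finite S" "fst ` set ys \<subseteq> S" for S and ys :: "('a \<times> real) list"
    using that(2)
  proof (induction ys)
    case (Cons z ys)
    have "(\<Sum>a\<in>S. f a * sum_list (map snd (filter (\<lambda>z'. fst z' = a) (z # ys))))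
        = (\<Sum>a\<in>S. if fst z = a then f a * snd z else 0)
          + (\<Sum>a\<in>S. f a * sum_list (map snd (filter (\<lambda>z'. fst z' = a) ys)))"
      by (subst sum.distrib[symmetric]) (auto intro!: sum.cong simp: distrib_left)
    with Cons that(1) show ?case by (auto simp: case_prod_beta)
  qed simp
  have "(\<integral>x. f x \<partial>measure_pmf (pmf_of_list xs))
      = (\<Sum>a\<in>fst ` set xs. f a * pmf (pmf_of_list xs) a)"
    using set_pmf_of_list[OF assms] by (intro integral_measure_pmf_real) auto
  also have "\<dots> = (\<Sum>(x, w)\<leftarrow>xs. f x * w)"
    by (simp add: pmf_pmf_of_list[OF assms] sum_eq)
  finally show ?thesis .
qed

lemma P2_finite_mixtureI:
  fixes Q :: "real pmf"
  assumes "\<And>x y l. is_distr (pA x y l)" "\<And>x y l. is_distr (pB x y l)"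
    and "\<And>x y y' l. (1/2) * (\<Sum>a\<in>UNIV. \<bar>pA x y l a - pA x y' l a\<bar>) \<le> epsA"
    and "\<And>y x x' l. (1/2) * (\<Sum>b\<in>UNIV. \<bar>pB x y l b - pB x' y l b\<bar>) \<le> epsB"
    and "\<And>a b x y. p a b x y = (\<integral>l. pA x y l a * pB x y l b \<partial>measure_pmf Q)"
  shows "P2 epsA epsB p"
  unfolding P2_def
  by (rule exI[of _ "measure_pmf Q"], rule exI[of _ pA], rule exI[of _ pB])
    (use assms measure_pmf.prob_space_axioms in auto)

lemma MDPDL_product_with_input_distr:
  assumes "P2 epsA epsB p" "is_distr pXY" "\<And>xy. lo \<le> pXY xy \<and> pXY xy \<le> hi"
  shows "MDPDL lo hi epsA epsB (\<lambda>a b x y. pXY (x, y) * p a b x y)"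
proof -
  obtain q :: "real measure" and pA pB where "prob_space q"
    and meas: "\<forall>x y a. (\<lambda>l. pA x y l a) \<in> borel_measurable q"
      "\<forall>x y b. (\<lambda>l. pB x y l b) \<in> borel_measurable q"
    and distr: "\<forall>x y l. is_distr (pA x y l) \<and> is_distr (pB x y l)"
    and p_eq: "\<forall>a b x y. p a b x y = (\<integral>l. pA x y l a * pB x y l b \<partial>q)"
    and tv: "\<forall>x y y' l. (1/2) * (\<Sum>a\<in>UNIV. \<bar>pA x y l a - pA x y' l a\<bar>) \<le> epsA"
      "\<forall>y x x' l. (1/2) * (\<Sum>b\<in>UNIV. \<bar>pB x y l b - pB x' y l b\<bar>) \<le> epsB"
    using assms(1) unfolding P2_def by (elim exE conjE) (rule that)
  have "pXY (x, y) * p a b x y = (\<integral>l. pXY (x, y) * pA x y l a * pB x y l b \<partial>q)" for a b x y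
    by (simp add: p_eq mult.assoc)
  then show ?thesis
    unfolding MDPDL_def
    by (intro exI[of _ q] exI[of _ "\<lambda>_. pXY"] exI[of _ pA] exI[of _ pB])
      (use \<open>prob_space q\<close> meas distr tv assms(2,3) in auto)
qed

definition hidden_weights :: "(real \<times> real) list" where
  "hidden_weights =
    [(1, (81 * sqrt 5 - 181) / 4), (2, 14/3 - 2 * sqrt 5), (3, (159 - 71 * sqrt 5) / 4),
     (4, (75 * sqrt 5 - 167) / 4), (5, 463/12 - 69 * sqrt 5 / 4), (6, (7 - 3 * sqrt 5) / 2),
     (7, sqrt 5 - 2), (8, (7 - 3 * sqrt 5) / 2)]"

definition alice_response :: "real \<Rightarrow> bool \<Rightarrow> bool \<Rightarrow> real" where
  "alice_response l x y =
    (if l = 1 \<or> l = 8 then (if x then 0 else if y then 1 else 3/4)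
     else if l = 2 \<or> l = 5 then (if x then 0 else 1)
     else if l = 3 then (if x then 1 else 0)
     else if l = 4 then (if x then 1 else if y then 0 else 1/4)
     else 1)"

definition bob_response :: "real \<Rightarrow> bool \<Rightarrow> bool \<Rightarrow> real" where
  "bob_response l x y =
    (if l = 1 \<or> l = 5 then (if y then 1 else if x then 0 else 1/4)
     else if l = 2 then (if y then 1 else if x then 3/4 else 1)
     else if l = 3 \<or> l = 4 then (if y then 0 else if x then 1 else 3/4)
     else if l = 6 then (if y then 0 else 1)
     else if l = 8 then (if y then 1 else 0)
     else 1)"

lemma sqrt_5_bounds: "2.236 < sqrt (5::real)" "sqrt (5::real) < 2.2361"
proof -
  show "2.236 < sqrt (5::real)"
    by (rule real_less_rsqrt) (simp add: power2_eq_square)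
  have "sqrt (5::real) < sqrt (2.2361\<^sup>2)"
    by (subst real_sqrt_less_iff) (simp add: power2_eq_square)
  then show "sqrt (5::real) < 2.2361" by simp
qed

lemma pmf_of_list_wf_hidden_weights: "pmf_of_list_wf hidden_weights"
  unfolding pmf_of_list_wf_def hidden_weights_def using sqrt_5_bounds
  by (auto simp: field_simps)

lemma pH_hidden_variable_model:
  "pH a b x y = (\<integral>l. bernoulli_distr (alice_response l x y) a * bernoulli_distr (bob_response l x y) b
                   \<partial>measure_pmf (pmf_of_list hidden_weights))"
  unfolding integral_pmf_of_list[OF pmf_of_list_wf_hidden_weights]
  unfolding hidden_weights_def pH_def bernoulli_distr_def alice_response_def bob_response_def
  by (cases a; cases b; cases x; cases y; simp add: field_simps)

lemma P2_pH: "P2 (1/4) (1/4) pH"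
proof (rule P2_finite_mixtureI[OF _ _ _ _ pH_hidden_variable_model])
  show "is_distr (bernoulli_distr (alice_response l x y))"
    "is_distr (bernoulli_distr (bob_response l x y))" for l x y
    by (intro is_distr_bernoulli_distr; simp add: alice_response_def bob_response_def)+
  show "(1/2) * (\<Sum>a\<in>UNIV. \<bar>bernoulli_distr (alice_response l x y) a
                               - bernoulli_distr (alice_response l x y') a\<bar>) \<le> 1/4"
    "(1/2) * (\<Sum>b\<in>UNIV. \<bar>bernoulli_distr (bob_response l x y) b
                               - bernoulli_distr (bob_response l x' y) b\<bar>) \<le> 1/4"
    for l x y x' y'
    unfolding total_variation_bernoulli_distr alice_response_def bob_response_def
    by (cases x; cases y; cases x'; cases y'; simp)+
qed

theorem mainTheorem5:
  shows "P2 (1/4) (1/4) pH \<and>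
    (\<forall>(lo::real) (hi::real) (pXY :: bool \<times> bool \<Rightarrow> real).
       0 < lo \<and> lo \<le> hi \<and> is_distr pXY \<and> (\<forall>xy. lo \<le> pXY xy \<and> pXY xy \<le> hi) \<longrightarrow>
       MDPDL lo hi (1/4) (1/4) (\<lambda>a b x y. pXY (x, y) * pH a b x y))"
  using P2_pH MDPDL_product_with_input_distr by blast

end
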